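(* For any constants $\mu>0$ and $\kappa>0$, the function $$\eta_g(\varepsilon)=\mu\bigl(1-\kappa\,Q^{-1}(\varepsilon)\bigr)(1-\varepsilon),\qquad \varepsilon\in(0,1),$$ is strictly concave on $(0,1)$; equivalently, $\eta_g''(\varepsilon)<0$ for all $\varepsilon\in(0,1)$.
   Context: $Q(x)=\int_x^\infty \frac{1}{\sqrt{2\pi}}e^{-t^2/2}\,dt$ is the standard normal tail function and $Q^{-1}:(0,1)\to\mathbb{R}$ its inverse. *)

theory Defs
  imports "HOL-Analysis.Analysis" "HOL-Probability.Probability"
begin

definition Qfun :: "real \<Rightarrow> real" where
  "Qfun x = (LBINT t:{x<..}. std_normal_density t)"

text \<open>Its inverse on (0,1): Q is a strictly decreasing bijection from the reals onto (0,1).\<close>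
definition Qinv :: "real \<Rightarrow> real" where
  "Qinv e = (THE x. Qfun x = e)"

definition strictly_concave_on :: "real set \<Rightarrow> (real \<Rightarrow> real) \<Rightarrow> bool" where
  "strictly_concave_on S f \<longleftrightarrow> convex S \<and>
    (\<forall>x\<in>S. \<forall>y\<in>S. \<forall>u. x \<noteq> y \<and> 0 < u \<and> u < 1 \<longrightarrow>
        f (u * x + (1 - u) * y) > u * f x + (1 - u) * f y)"

definition eta_g :: "real \<Rightarrow> real \<Rightarrow> real \<Rightarrow> real" where
  "eta_g \<mu> \<kappa> e = \<mu> * (1 - \<kappa> * Qinv e) * (1 - e)"

end

theory Submission imports Defs "HOL-Real_Asymp.Real_Asymp" begin

(*
  Write phi for the standard normal density and x = Q^{-1}(e).  Since Q' = -phi, the inverse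
  function rule gives (Q^{-1})'(e) = -1/phi(x), and with phi'(x) = -x phi(x) a direct computation
  yields
      eta_g''(e) = - mu kappa (2 phi(x) + (1 - e) x) / phi(x)^2.
  By the symmetry Q(x) + Q(-x) = 1 we have 1 - e = Q(-x), so the sign of eta_g'' is governed by
  2 phi(x) + Q(-x) x.  This is clearly positive for x >= 0, and for x < 0 the Mills-ratio bound
  y Q(y) <= phi(y) (y > 0), applied at y = -x, shows it is at least phi(x) > 0.
*)

section \<open>Strict concavity from a negative second derivative\<close>

lemma convex_real_between:
  fixes S :: "real set"
  assumes "convex S" "x \<in> S" "y \<in> S" "x \<le> t" "t \<le> y"
  shows "t \<in> S"
  using assms unfolding is_interval_convex_1[symmetric] is_interval_1 by blast

text \<open>A function whose derivative strictly decreases on a convex set lies strictly above its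
  chords there; this is the usual two mean value theorem argument.\<close>

lemma strict_concavity_inequality:
  fixes f f' :: "real \<Rightarrow> real" and S :: "real set"
  assumes "convex S"
    and deriv: "\<And>x. x \<in> S \<Longrightarrow> (f has_real_derivative f' x) (at x)"
    and decr: "\<And>x y. x \<in> S \<Longrightarrow> y \<in> S \<Longrightarrow> x < y \<Longrightarrow> f' y < f' x"
    and xy: "x \<in> S" "y \<in> S" "x < y" and u: "0 < u" "u < 1"
  shows "f (u * x + (1 - u) * y) > u * f x + (1 - u) * f y"
proof -
  define z where "z = u * x + (1 - u) * y"
  have z_dist: "z - x = (1 - u) * (y - x)" "y - z = u * (y - x)"
    by (simp_all add: z_def algebra_simps)
  have "0 < (1 - u) * (y - x)"
    using xy u by simp
  then have xz: "x < z"
    using z_dist(1) by linarith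
  have "0 < u * (y - x)"
    using xy u by simp
  then have zy: "z < y"
    using z_dist(2) by linarith
  have deriv_between: "(f has_real_derivative f' t) (at t)" if "x \<le> t" "t \<le> y" for t
    using deriv convex_real_between[OF \<open>convex S\<close> xy(1,2) that] by blast
  obtain a where a: "x < a" "a < z" "f z - f x = (z - x) * f' a"
    using MVT2[OF xz, of f f'] deriv_between zy by fastforce
  obtain b where b: "z < b" "b < y" "f y - f z = (y - z) * f' b"
    using MVT2[OF zy, of f f'] deriv_between xz by fastforce
  have "f' b < f' a"
    using a b xz zy xy convex_real_between[OF \<open>convex S\<close> xy(1,2)]
    by (intro decr) auto
  have "f z - (u * f x + (1 - u) * f y) = u * (f z - f x) - (1 - u) * (f y - f z)"
    by (simp add: algebra_simps)
  also have "\<dots> = u * (1 - u) * (y - x) * (f' a - f' b)"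
    unfolding a(3) b(3) z_dist by (simp add: algebra_simps)
  also have "\<dots> > 0"
    using u xy \<open>f' b < f' a\<close> by (intro mult_pos_pos) auto
  finally show ?thesis unfolding z_def by simp
qed

lemma strictly_concave_on_if_second_deriv_neg:
  fixes f f' f'' :: "real \<Rightarrow> real" and S :: "real set"
  assumes "convex S"
    and deriv: "\<And>x. x \<in> S \<Longrightarrow> (f has_real_derivative f' x) (at x)"
    and deriv2: "\<And>x. x \<in> S \<Longrightarrow> (f' has_real_derivative f'' x) (at x)"
    and neg: "\<And>x. x \<in> S \<Longrightarrow> f'' x < 0"
  shows "strictly_concave_on S f"
proof -
  have decr: "f' y < f' x" if "x \<in> S" "y \<in> S" "x < y" for x y
  proof (rule DERIV_neg_imp_decreasing[OF \<open>x < y\<close>])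
    fix t assume "x \<le> t" "t \<le> y"
    then have "t \<in> S"
      using convex_real_between[OF \<open>convex S\<close> that(1,2)] by blast
    then show "\<exists>D. (f' has_real_derivative D) (at t) \<and> D < 0"
      using deriv2 neg by blast
  qed
  show ?thesis
    unfolding strictly_concave_on_def
  proof (intro conjI ballI allI impI)
    fix x y u :: real assume xy: "x \<in> S" "y \<in> S" and h: "x \<noteq> y \<and> 0 < u \<and> u < 1"
    show "f (u * x + (1 - u) * y) > u * f x + (1 - u) * f y"
    proof (cases "x < y")
      case True
      then show ?thesis
        using strict_concavity_inequality[OF \<open>convex S\<close> deriv decr xy] h by blast
    next
      case False
      then have "y < x" using h by auto
      from strict_concavity_inequality[OF \<open>convex S\<close> deriv decr xy(2) xy(1) this, of "1 - u"] h
      show ?thesis by (simp add: algebra_simps)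
    qed
  qed (rule \<open>convex S\<close>)
qed

lemma std_normal_density_pos: "0 < std_normal_density x"
  by (simp add: std_normal_density_def)

lemma std_normal_density_le_1: "std_normal_density x \<le> 1"
proof -
  have "exp (- (x\<^sup>2 / 2)) \<le> 1" by simp
  also have "1 \<le> sqrt (2 * pi)" using pi_gt3 by simp
  finally show ?thesis
    unfolding std_normal_density_def by (simp add: divide_le_eq_1)
qed

lemma std_normal_density_even: "std_normal_density (- x) = std_normal_density x"
  by (simp add: std_normal_density_def)

lemma std_normal_density_deriv:
  "(std_normal_density has_real_derivative - x * std_normal_density x) (at x)"
  unfolding std_normal_density_def by (auto intro!: derivative_eq_intros simp: field_simps)

lemma std_normal_density_tendsto_0: "(std_normal_density \<longlongrightarrow> 0) at_top"
proof -
  have "((\<lambda>t. (1 / sqrt (2 * pi)) * exp (- t\<^sup>2 / 2)) \<longlongrightarrow> (1 / sqrt (2 * pi)) * 0) at_top"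
    by real_asymp
  then show ?thesis by (simp add: std_normal_density_def[abs_def])
qed

lemma std_normal_density_set_integrable:
  "A \<in> sets borel \<Longrightarrow> set_integrable lborel A std_normal_density"
  unfolding set_integrable_def by (intro integrable_mult_indicator) auto

text \<open>First moment of the upper tail: \<open>\<integral>\<^sub>y\<^sup>\<infinity> t \<phi>(t) dt = \<phi>(y)\<close>, since \<open>-\<phi>\<close> is an
  antiderivative of \<open>t \<phi>(t)\<close>.\<close>

lemma std_normal_tail_first_moment:
  assumes "0 \<le> y"
  shows "has_bochner_integral lborel
           (\<lambda>t. indicator {y..} t *\<^sub>R (t * std_normal_density t)) (std_normal_density y)"
proof -
  have "(\<integral>\<^sup>+t. ennreal (t * std_normal_density t) * indicator {y..} t \<partial>lborel)
          = ennreal (0 - (- std_normal_density y))"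
  proof (rule nn_integral_FTC_atLeast)
    show "(\<lambda>t. t * std_normal_density t) \<in> borel_measurable borel" by measurable
    show "((\<lambda>t. - std_normal_density t) has_real_derivative x * std_normal_density x) (at x)" for x
      using DERIV_minus[OF std_normal_density_deriv[of x]] by simp
    show "y \<le> x \<Longrightarrow> 0 \<le> x * std_normal_density x" for x
      using assms std_normal_density_pos[of x] by simp
    show "((\<lambda>t. - std_normal_density t) \<longlongrightarrow> 0) at_top"
      using tendsto_minus[OF std_normal_density_tendsto_0] by simp
  qed
  then have "(\<integral>\<^sup>+t. ennreal (indicator {y..} t *\<^sub>R (t * std_normal_density t)) \<partial>lborel)
               = ennreal (std_normal_density y)"
    by (simp add: indicator_mult_ennreal mult.commute)
  then show ?thesis
    by (intro has_bochner_integral_nn_integral) (use assms in \<open>auto split: split_indicator\<close>)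
qed

section \<open>The tail function \<open>Q\<close>\<close>

lemma Qfun_interval_integral: "Qfun x = (LBINT t=ereal x..\<infinity>. std_normal_density t)"
  unfolding Qfun_def by (simp add: interval_integral_to_infinity_eq)

lemma std_normal_density_interval_integrable:
  "interval_lebesgue_integrable lborel a b std_normal_density"
  unfolding interval_lebesgue_integrable_def
  by (auto intro!: std_normal_density_set_integrable)

text \<open>\<open>Q(x) = Q(0) - \<integral>\<^sub>0\<^sup>x \<phi>\<close>, the form to which the fundamental theorem of calculus applies.\<close>

lemma Qfun_eq_Qfun0_minus: "Qfun x = Qfun 0 - (LBINT t=ereal 0..ereal x. std_normal_density t)"
proof -
  have "(LBINT t=ereal 0..ereal x. std_normal_density t) + (LBINT t=ereal x..\<infinity>. std_normal_density t)
          = (LBINT t=ereal 0..\<infinity>. std_normal_density t)"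
    by (rule interval_integral_sum) (rule std_normal_density_interval_integrable)
  then show ?thesis
    using Qfun_interval_integral[of x] Qfun_interval_integral[of 0] by simp
qed

lemma Qfun_deriv: "(Qfun has_real_derivative - std_normal_density x) (at x)"
proof -
  let ?a = "- \<bar>x\<bar> - 1" and ?b = "\<bar>x\<bar> + 1" and ?F = "\<lambda>u. LBINT t=ereal 0..ereal u. std_normal_density t"
  have "continuous_on {?a..?b} std_normal_density"
    unfolding std_normal_density_def by (intro continuous_intros) auto
  then have "(?F has_vector_derivative std_normal_density x) (at x within {?a..?b})"
    using interval_integral_FTC2[of ?a 0 ?b, of std_normal_density x] by linarith
  then have "(?F has_real_derivative std_normal_density x) (at x)"
    using at_within_Icc_at[of ?a x ?b] has_real_derivative_iff_has_vector_derivative by simp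
  then have "((\<lambda>u. Qfun 0 - ?F u) has_real_derivative 0 - std_normal_density x) (at x)"
    by (intro DERIV_diff DERIV_const)
  then show ?thesis
    by (simp add: Qfun_eq_Qfun0_minus[symmetric])
qed

text \<open>By the evenness of \<open>\<phi>\<close>, \<open>Q(-x)\<close> is the lower tail up to \<open>x\<close>, so \<open>Q(x) + Q(-x)\<close> is the
  total mass.\<close>

lemma Qfun_symmetric: "Qfun x + Qfun (- x) = 1"
proof -
  have "Qfun x = (LBINT t=-\<infinity>..ereal (- x). std_normal_density (- t))"
    using interval_integral_reflect[of "ereal x" "\<infinity>" std_normal_density] Qfun_interval_integral[of x]
    by simp
  then have "Qfun x + Qfun (- x) = (LBINT t=-\<infinity>..ereal (- x). std_normal_density t)
                                    + (LBINT t=ereal (- x)..\<infinity>. std_normal_density t)"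
    using Qfun_interval_integral[of "- x"] by (simp add: std_normal_density_even)
  also have "\<dots> = (LBINT t=-\<infinity>..\<infinity>. std_normal_density t)"
    by (rule interval_integral_sum) (rule std_normal_density_interval_integrable)
  also have "\<dots> = 1"
    unfolding interval_lebesgue_integral_def set_lebesgue_integral_def einterval_def by simp
  finally show ?thesis .
qed

text \<open>The Mills-ratio bound \<open>Q(y) \<le> \<phi>(y)/y\<close> for \<open>y > 0\<close>: on the tail \<open>t > y\<close> we have
  \<open>\<phi>(t) \<le> t \<phi>(t)/y\<close>, whose integral is \<open>\<phi>(y)/y\<close>.\<close>

lemma Qfun_mills_bound:
  assumes "0 < y"
  shows "Qfun y \<le> std_normal_density y / y"
proof -
  have "Qfun y = integral\<^sup>L lborel (\<lambda>t. indicator {y<..} t *\<^sub>R std_normal_density t)"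
    unfolding Qfun_def set_lebesgue_integral_def by simp
  also have "\<dots> \<le> integral\<^sup>L lborel (\<lambda>t. indicator {y..} t *\<^sub>R (t * std_normal_density t) / y)"
  proof (rule integral_mono)
    show "integrable lborel (\<lambda>t. indicator {y<..} t *\<^sub>R std_normal_density t)"
      using std_normal_density_set_integrable[of "{y<..}"] unfolding set_integrable_def by simp
    show "integrable lborel (\<lambda>t. indicator {y..} t *\<^sub>R (t * std_normal_density t) / y)"
      using std_normal_tail_first_moment[of y] assms
      by (intro integrable_divide) (auto simp: has_bochner_integral_iff)
    show "indicator {y<..} t *\<^sub>R std_normal_density t
            \<le> indicator {y..} t *\<^sub>R (t * std_normal_density t) / y" for t
      using assms std_normal_density_pos[of t]
      by (auto split: split_indicator simp: field_simps intro!: mult_right_mono)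
  qed
  also have "\<dots> = std_normal_density y / y"
    using std_normal_tail_first_moment[of y] assms by (simp add: has_bochner_integral_iff)
  finally show ?thesis .
qed

lemma Qfun_nonneg: "0 \<le> Qfun x"
  unfolding Qfun_def set_lebesgue_integral_def by (intro integral_nonneg_AE) auto

lemma Qfun_strict_decreasing: "x < y \<Longrightarrow> Qfun y < Qfun x"
  by (rule DERIV_neg_imp_decreasing) (auto intro!: Qfun_deriv std_normal_density_pos)

lemma Qfun_inj: "Qfun x = Qfun y \<Longrightarrow> x = y"
  using Qfun_strict_decreasing[of x y] Qfun_strict_decreasing[of y x]
  by (cases x y rule: linorder_cases) auto

text \<open>\<open>Q\<close> attains every value in \<open>(0,1)\<close>: by the Mills bound (with \<open>\<phi> \<le> 1\<close>) and symmetry it is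
  below \<open>e\<close> far to the right and above \<open>e\<close> far to the left.\<close>

lemma Qfun_surjective:
  assumes "0 < e" "e < 1"
  shows "\<exists>x. Qfun x = e"
proof -
  have tail: "Qfun y \<le> 1 / y" if "0 < y" for y
    using Qfun_mills_bound[OF that] std_normal_density_le_1[of y] that
    by (meson divide_right_mono less_imp_le order_trans)
  define b where "b = 2 / e"
  define a where "a = - (2 / (1 - e))"
  have "0 < b" "0 < - a" using assms by (simp_all add: a_def b_def)
  have "Qfun b \<le> e / 2" using tail[OF \<open>0 < b\<close>] by (simp add: b_def)
  then have "Qfun b \<le> e" using assms by simp
  have "Qfun (- a) \<le> (1 - e) / 2" using tail[OF \<open>0 < - a\<close>] by (simp add: a_def)
  then have "e \<le> Qfun a" using Qfun_symmetric[of a] assms by simp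
  moreover have "a \<le> b" using \<open>0 < b\<close> \<open>0 < - a\<close> by simp
  ultimately show ?thesis
    using IVT2[of Qfun b e a] \<open>Qfun b \<le> e\<close> DERIV_isCont[OF Qfun_deriv] by blast
qed

lemma Qinv_Qfun: "Qinv (Qfun x) = x"
  unfolding Qinv_def by (rule the_equality) (auto intro: Qfun_inj)

lemma Qfun_Qinv: "0 < e \<Longrightarrow> e < 1 \<Longrightarrow> Qfun (Qinv e) = e"
  using Qfun_surjective Qinv_Qfun by metis

lemma Qinv_deriv:
  assumes "0 < e" "e < 1"
  shows "(Qinv has_real_derivative - 1 / std_normal_density (Qinv e)) (at e)"
proof -
  have "isCont Qinv (Qfun (Qinv e))"
    by (rule isCont_inverse_function[of 1]) (auto simp: Qinv_Qfun DERIV_isCont[OF Qfun_deriv])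
  then have "isCont Qinv e"
    using Qfun_Qinv[OF assms] by simp
  then have "(Qinv has_real_derivative inverse (- std_normal_density (Qinv e))) (at e)"
    using DERIV_inverse_function[where f=Qfun and g=Qinv and a=0 and b=1, OF Qfun_deriv]
      assms std_normal_density_pos[of "Qinv e"] Qfun_Qinv by force
  then show ?thesis
    by (simp add: divide_inverse)
qed

text \<open>For
  \<open>x < 0\<close> the Mills bound at \<open>-x\<close> gives \<open>Q(-x) x \<ge> -\<phi>(x)\<close>.\<close>

lemma std_normal_density_Qfun_key_ineq: "0 < 2 * std_normal_density x + Qfun (- x) * x"
proof (cases "0 \<le> x")
  case True
  then show ?thesis
    using std_normal_density_pos[of x] mult_nonneg_nonneg[OF Qfun_nonneg[of "- x"] True] by linarith
next
  case False
  then have "0 < - x" by simp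
  have "Qfun (- x) * (- x) \<le> std_normal_density x"
    using Qfun_mills_bound[OF \<open>0 < - x\<close>] \<open>0 < - x\<close>
    by (simp add: field_simps std_normal_density_even)
  then show ?thesis
    using std_normal_density_pos[of x] by simp
qed

section \<open>Derivatives of \<open>\<eta>\<^sub>g\<close>\<close>

text \<open>Closed forms of \<open>\<eta>\<^sub>g'\<close> and \<open>\<eta>\<^sub>g''\<close>, obtained from \<open>(Q\<^sup>-\<^sup>1)' = -1/\<phi>(Q\<^sup>-\<^sup>1)\<close> and
  \<open>\<phi>'(x) = -x \<phi>(x)\<close>.\<close>

definition eta_g_deriv :: "real \<Rightarrow> real \<Rightarrow> real \<Rightarrow> real" where
  "eta_g_deriv \<mu> \<kappa> e = \<mu> * (\<kappa> * (1 - e) / std_normal_density (Qinv e) - 1 + \<kappa> * Qinv e)"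

definition eta_g_deriv2 :: "real \<Rightarrow> real \<Rightarrow> real \<Rightarrow> real" where
  "eta_g_deriv2 \<mu> \<kappa> e = - \<mu> * \<kappa> * (2 * std_normal_density (Qinv e) + (1 - e) * Qinv e)
                            / (std_normal_density (Qinv e))\<^sup>2"

lemma eta_g_has_deriv:
  assumes "e \<in> {0<..<1}"
  shows "(eta_g \<mu> \<kappa> has_real_derivative eta_g_deriv \<mu> \<kappa> e) (at e)"
proof -
  have "eta_g \<mu> \<kappa> = (\<lambda>e. \<mu> * (1 - \<kappa> * Qinv e) * (1 - e))"
    by (rule ext) (simp add: eta_g_def)
  then show ?thesis
    using Qinv_deriv[of e] assms std_normal_density_pos[of "Qinv e"]
    by (auto intro!: derivative_eq_intros simp: eta_g_deriv_def field_simps)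
qed

lemma eta_g_deriv_has_deriv:
  assumes "e \<in> {0<..<1}"
  shows "(eta_g_deriv \<mu> \<kappa> has_real_derivative eta_g_deriv2 \<mu> \<kappa> e) (at e)"
proof -
  let ?p = "\<lambda>e. std_normal_density (Qinv e)"
  have Qinv': "(Qinv has_real_derivative - 1 / ?p e) (at e)"
    using assms Qinv_deriv by auto
  have p': "(?p has_real_derivative Qinv e) (at e)"
    using DERIV_chain2[OF std_normal_density_deriv Qinv'] std_normal_density_pos[of "Qinv e"]
    by simp
  have "eta_g_deriv \<mu> \<kappa> = (\<lambda>e. \<mu> * (\<kappa> * (1 - e) / ?p e - 1 + \<kappa> * Qinv e))"
    by (rule ext) (simp add: eta_g_deriv_def)
  then show ?thesis
    using std_normal_density_pos[of "Qinv e"]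
    by (auto intro!: derivative_eq_intros Qinv' p'
        simp: eta_g_deriv2_def field_simps power2_eq_square)
qed

text \<open>The second derivative is negative: with \<open>x = Q\<^sup>-\<^sup>1(e)\<close> we have \<open>1 - e = Q(-x)\<close>.\<close>

lemma eta_g_deriv2_neg:
  assumes "\<mu> > 0" "\<kappa> > 0" "e \<in> {0<..<1}"
  shows "eta_g_deriv2 \<mu> \<kappa> e < 0"
proof -
  define x where "x = Qinv e"
  have "1 - e = Qfun (- x)"
    using Qfun_symmetric[of x] Qfun_Qinv assms(3) by (auto simp: x_def)
  then have "0 < 2 * std_normal_density x + (1 - e) * x"
    using std_normal_density_Qfun_key_ineq by simp
  then have "0 < \<mu> * \<kappa> * (2 * std_normal_density x + (1 - e) * x) / (std_normal_density x)\<^sup>2"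
    using assms std_normal_density_pos[of x] by simp
  then show ?thesis
    unfolding eta_g_deriv2_def x_def by simp
qed

theorem mainTheorem2:
  fixes \<mu> \<kappa> :: real
  assumes "\<mu> > 0" and "\<kappa> > 0"
  shows "strictly_concave_on {0<..<1} (eta_g \<mu> \<kappa>)
    \<and> (\<exists>d1 d2. (\<forall>e\<in>{0<..<1}. (eta_g \<mu> \<kappa> has_real_derivative d1 e) (at e))
             \<and> (\<forall>e\<in>{0<..<1}. (d1 has_real_derivative d2 e) (at e) \<and> d2 e < 0))"
proof -
  have deriv: "\<And>e. e \<in> {0<..<1} \<Longrightarrow> (eta_g \<mu> \<kappa> has_real_derivative eta_g_deriv \<mu> \<kappa> e) (at e)"
    by (rule eta_g_has_deriv)
  have deriv2: "\<And>e. e \<in> {0<..<1} \<Longrightarrow> (eta_g_deriv \<mu> \<kappa> has_real_derivative eta_g_deriv2 \<mu> \<kappa> e) (at e)"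
    by (rule eta_g_deriv_has_deriv)
  have neg: "\<And>e. e \<in> {0<..<1} \<Longrightarrow> eta_g_deriv2 \<mu> \<kappa> e < 0"
    using eta_g_deriv2_neg assms by blast
  have "strictly_concave_on {0<..<1} (eta_g \<mu> \<kappa>)"
    using strictly_concave_on_if_second_deriv_neg[OF convex_real_interval(8) deriv deriv2 neg] .
  then show ?thesis
    using deriv deriv2 neg by blast
qed

end
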